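(* Assume the standing hypotheses described in the context. Take $t,\varepsilon,\theta\ge0$ and $x\in C$ such that \[\|x-x_0\|\le t<\bar t,\qquad \|F'(x_0)^{-1}F(x)\|\le f(t)+\varepsilon,\qquad t-(1+\theta)\frac{f(t)+\varepsilon}{f'(t)}<R.\] If $y\in\mathbb X$ and $\|F'(x_0)^{-1}[F(x)+F'(x)(y-x)]\|\le\theta\|F'(x_0)^{-1}F(x)\|$, then (1) $\|y-x\|\le-(1+\theta)\frac{f(t)+\varepsilon}{f'(t)}$; (2) $\|y-x_0\|\le t-(1+\theta)\frac{f(t)+\varepsilon}{f'(t)}<R$; (3) $\|F'(x_0)^{-1}F(y)\|\le f\Big(t-(1+\theta)\frac{f(t)+\varepsilon}{f'(t)}\Big)+\varepsilon+2\theta(f(t)+\varepsilon)$.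
   Context: Standing hypotheses: $\mathbb X,\mathbb Y$ are Banach spaces; $B(x,r)$ is the open ball. $R\in\mathbb R$, $C\subseteq\mathbb X$, $F:C\to\mathbb Y$ is continuous and continuously differentiable on $\mathrm{int}(C)$, $x_0\in\mathrm{int}(C)$ with $F'(x_0)$ non-singular, $f:[0,R)\to\mathbb R$ is continuously differentiable, $B(x_0,R)\subseteq C$, $\|F'(x_0)^{-1}[F'(y)-F'(x)]\|\le f'(\|y-x\|+\|x-x_0\|)-f'(\|x-x_0\|)$ for all $x,y\in B(x_0,R)$ with $\|x-x_0\|+\|y-x\|<R$, $\|F'(x_0)^{-1}F(x_0)\|\le f(0)$, and (h1) $f(0)>0$, $f'(0)=-1$; (h2) $f'$ is strictly increasing and convex; (h3) $f(t)<0$ for some $t\in(0,R)$. Notation: $\bar t:=\sup\{t\in[0,R):f'(t)<0\}$. *)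

theory Defs
  imports "HOL-Analysis.Analysis"
begin

definition tbar :: "(real \<Rightarrow> real) \<Rightarrow> real \<Rightarrow> real" where
  "tbar f' R = Sup {t. 0 \<le> t \<and> t < R \<and> f' t < 0}"

end

theory Submission
  imports Defs
begin

text \<open>The majorant condition between \<open>x0\<close> and \<open>x\<close> together with a Banach-type perturbation bound
  gives \<open>\<parallel>F'(x0)\<inverse>F'(x) v\<parallel> \<ge> -f'(t) \<parallel>v\<parallel>\<close>, so the inexactness condition bounds \<open>\<parallel>y - x\<parallel>\<close> by the
  majorant Newton step \<open>D = -(1 + \<theta>)(f t + \<epsilon>)/f' t\<close>. Along the segment from \<open>x\<close> to \<open>y\<close> the
  variation of \<open>F'\<close> is dominated, via the majorant condition and convexity of \<open>f'\<close>, by the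
  derivative of \<open>\<tau> \<mapsto> f (t + \<tau> D) - \<tau> D f' t\<close>; the mean value inequality then bounds the
  linearization error by \<open>f (t + D) - f t - f' t D\<close>, and adding the inexact residual gives the
  estimate for \<open>F y\<close>.\<close>

lemma convex_on_increment_mono:
  fixes g :: "real \<Rightarrow> real"
  assumes cvx: "convex_on I g" and I: "a \<in> I" "b + h \<in> I" and "a \<le> b" "0 \<le> h"
  shows "g (a + h) - g a \<le> g (b + h) - g b"
proof (cases "a = b + h")
  case True
  then show ?thesis using assms by simp
next
  case False
  define l where "l = (b - a) / (b + h - a)"
  have "0 \<le> l" "l \<le> 1" "l * (b + h - a) = b - a"
    using False assms by (auto simp: l_def divide_simps)
  then have "a + h = (1 - (1 - l)) * a + (1 - l) * (b + h)" "b = (1 - l) * a + l * (b + h)"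
    by (simp_all add: algebra_simps)
  with \<open>0 \<le> l\<close> \<open>l \<le> 1\<close> have "g (a + h) \<le> l * g a + (1 - l) * g (b + h)"
    and "g b \<le> (1 - l) * g a + l * g (b + h)"
    using convex_onD[OF cvx, of "1 - l" a "b + h"] convex_onD[OF cvx, of l a "b + h"] I by simp_all
  then show ?thesis by (simp add: algebra_simps)
qed

lemma less_tbarD:
  fixes f' :: "real \<Rightarrow> real"
  assumes "t < tbar f' R" "0 \<le> t" "0 < R" "f' 0 < 0" "mono_on {0..<R} f'"
  shows "t < R" "f' t < 0"
proof -
  define S where "S = {s. 0 \<le> s \<and> s < R \<and> f' s < 0}"
  have "0 \<in> S" "bdd_above S"
    using assms by (auto simp: S_def bdd_above_def intro!: exI[of _ R])
  then obtain s where s: "s \<in> S" "t < s"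
    using assms(1) less_cSup_iff[of S t] unfolding tbar_def S_def[symmetric] by blast
  then show "t < R" by (simp add: S_def)
  have "f' t \<le> f' s"
    using s assms(2,5) by (auto simp: S_def intro: mono_onD)
  with s show "f' t < 0" by (simp add: S_def)
qed

lemma norm_left_inverse_perturbation_ge:
  fixes A B :: "'a::real_normed_vector \<Rightarrow>\<^sub>L 'b::real_normed_vector" and L :: "'b \<Rightarrow>\<^sub>L 'a"
  assumes L_A: "L o\<^sub>L A = id_blinfun" and bound: "norm (L o\<^sub>L (B - A)) \<le> c"
  shows "(1 - c) * norm v \<le> norm (L (B v))"
proof -
  have L_A_apply: "L (A v) = v"
    using L_A by (metis blinfun_apply_blinfun_compose id_apply id_blinfun.rep_eq)
  have "L (B v) = v + (L o\<^sub>L (B - A)) v"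
    by (simp add: blinfun.diff_left blinfun.diff_right L_A_apply)
  moreover have "norm ((L o\<^sub>L (B - A)) v) \<le> c * norm v"
    using norm_blinfun[of "L o\<^sub>L (B - A)" v] bound
    by (meson mult_right_mono norm_ge_zero order_trans)
  ultimately show ?thesis
    using norm_triangle_ineq2[of v "- (L o\<^sub>L (B - A)) v"] by (simp add: algebra_simps)
qed

lemma linearization_error_le:
  fixes F :: "'a::real_normed_vector \<Rightarrow> 'b::real_normed_vector" and F' :: "'a \<Rightarrow> 'a \<Rightarrow> 'b"
    and \<phi> \<phi>' :: "real \<Rightarrow> real"
  assumes F_deriv: "\<And>\<tau>. \<tau> \<in> {0..1} \<Longrightarrow> (F has_derivative F' (x + \<tau> *\<^sub>R (y - x))) (at (x + \<tau> *\<^sub>R (y - x)))"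
    and \<phi>_cont: "continuous_on {0..1} \<phi>"
    and \<phi>_deriv: "\<And>\<tau>. \<tau> \<in> {0<..<1} \<Longrightarrow> (\<phi> has_real_derivative \<phi>' \<tau>) (at \<tau>)"
    and bound: "\<And>\<tau>. \<tau> \<in> {0<..<1} \<Longrightarrow> norm (F' (x + \<tau> *\<^sub>R (y - x)) (y - x) - F' x (y - x)) \<le> \<phi>' \<tau>"
  shows "norm (F y - F x - F' x (y - x)) \<le> \<phi> 1 - \<phi> 0"
proof -
  define p where "p \<tau> = x + \<tau> *\<^sub>R (y - x)" for \<tau> :: real
  define h where "h \<tau> = F (p \<tau>) - \<tau> *\<^sub>R F' x (y - x)" for \<tau>
  have h_deriv: "(h has_vector_derivative F' (p \<tau>) (y - x) - F' x (y - x)) (at \<tau>)"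
    if "\<tau> \<in> {0..1}" for \<tau>
  proof -
    have "(p has_vector_derivative y - x) (at \<tau>)"
      unfolding p_def by (auto intro!: derivative_eq_intros)
    moreover have "(F has_derivative F' (p \<tau>)) (at (p \<tau>) within range p)"
      using F_deriv[OF that] by (simp add: p_def has_derivative_at_withinI)
    ultimately have "(F \<circ> p has_vector_derivative F' (p \<tau>) (y - x)) (at \<tau>)"
      using vector_derivative_diff_chain_within by blast
    then show ?thesis
      unfolding h_def by (auto intro!: derivative_eq_intros simp: o_def)
  qed
  have "norm (h 1 - h 0) \<le> \<phi> 1 - \<phi> 0"
  proof (rule differentiable_bound_general[OF zero_less_one _ \<phi>_cont])
    show "continuous_on {0..1} h"
      by (meson atLeastAtMost_iff continuous_at_imp_continuous_on h_deriv has_vector_derivative_continuous)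
  qed (use h_deriv \<phi>_deriv bound in \<open>auto simp: p_def has_real_derivative_iff_has_vector_derivative\<close>)
  moreover have "h 1 - h 0 = F y - F x - F' x (y - x)"
    by (simp add: h_def p_def)
  ultimately show ?thesis by simp
qed

locale majorant_condition =
  fixes F :: "'a::banach \<Rightarrow> 'b::banach" and F' :: "'a \<Rightarrow> 'a \<Rightarrow>\<^sub>L 'b" and Finv :: "'b \<Rightarrow>\<^sub>L 'a"
    and x0 :: 'a and R :: real and f f' :: "real \<Rightarrow> real"
  assumes F_deriv: "\<And>z. z \<in> ball x0 R \<Longrightarrow> (F has_derivative F' z) (at z)"
    and Finv_left: "Finv o\<^sub>L F' x0 = id_blinfun"
    and majorant: "\<And>u v. u \<in> ball x0 R \<Longrightarrow> v \<in> ball x0 R \<Longrightarrow> norm (u - x0) + norm (v - u) < R \<Longrightarrow>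
        norm (Finv o\<^sub>L (F' v - F' u)) \<le> f' (norm (v - u) + norm (u - x0)) - f' (norm (u - x0))"
    and f_deriv: "\<And>s. s \<in> {0..<R} \<Longrightarrow> (f has_real_derivative f' s) (at s within {0..<R})"
    and f'_0: "f' 0 = -1"
    and f'_mono: "mono_on {0..<R} f'"
    and f'_convex: "convex_on {0..<R} f'"
begin

lemma derivative_lower_bound:
  assumes "norm (x - x0) \<le> t" "t < R"
  shows "- f' t * norm v \<le> norm (Finv (F' x v))"
proof -
  have "norm (Finv o\<^sub>L (F' x - F' x0)) \<le> f' (norm (x - x0)) + 1"
    using majorant[of x0 x] assms f'_0 norm_ge_zero[of "x - x0"]
    by (simp add: dist_norm norm_minus_commute)
  also have "\<dots> \<le> f' t + 1"
    using assms by (intro add_right_mono mono_onD[OF f'_mono]) (auto intro: order_trans[OF norm_ge_zero])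
  finally show ?thesis
    using norm_left_inverse_perturbation_ge[OF Finv_left] by (smt (verit))
qed

lemma linearization_error_majorant:
  assumes x: "norm (x - x0) \<le> t" and y: "norm (y - x) \<le> D" and "0 \<le> t" "t + D < R"
  shows "norm (Finv (F y - F x - F' x (y - x))) \<le> f (t + D) - f t - f' t * D"
proof (cases "D = 0")
  case True
  then show ?thesis using y by simp
next
  case False
  define s d where "s = norm (x - x0)" and "d = norm (y - x)"
  have "0 \<le> d" "d \<le> D" "s \<le> t" using y x by (simp_all add: s_def d_def)
  with False have "0 < D" by simp
  define p where "p \<tau> = x + \<tau> *\<^sub>R (y - x)" for \<tau> :: real
  have tD: "0 \<le> \<tau> * d" "\<tau> * d \<le> \<tau> * D" "\<tau> * D \<le> D" "0 \<le> \<tau> * D" if "\<tau> \<in> {0..1}" for \<tau>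
    using that \<open>0 < D\<close> \<open>0 \<le> d\<close> \<open>d \<le> D\<close> by (auto intro: mult_left_mono mult_left_le_one_le)
  have p_ball: "p \<tau> \<in> ball x0 R" and p_dist: "norm (p \<tau> - x) = \<tau> * d" if "\<tau> \<in> {0..1}" for \<tau>
  proof -
    have "norm (p \<tau> - x0) \<le> s + \<tau> * d"
      using norm_triangle_ineq[of "x - x0" "\<tau> *\<^sub>R (y - x)"] that
      by (simp add: p_def s_def d_def diff_add_eq)
    then show "p \<tau> \<in> ball x0 R"
      using tD[OF that] \<open>s \<le> t\<close> \<open>t + D < R\<close> by (simp add: dist_norm norm_minus_commute)
    show "norm (p \<tau> - x) = \<tau> * d" using that by (simp add: p_def d_def)
  qed
  have "x \<in> ball x0 R" using p_ball[of 0] by (simp add: p_def)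
  have f_deriv_at: "(f has_real_derivative f' r) (at r)" if "r \<in> {0<..<R}" for r
    using f_deriv[of r] that at_within_interior[of r "{0..<R}"] by auto
  have "continuous_on {0..<R} f"
    using f_deriv DERIV_continuous_on by blast
  then have f_cont: "continuous_on {0..1} (\<lambda>\<tau>. f (t + \<tau> * D))"
  proof (rule continuous_on_compose2[of _ f])
    show "(\<lambda>\<tau>. t + \<tau> * D) ` {0..1} \<subseteq> {0..<R}"
      using tD(3,4) \<open>0 \<le> t\<close> \<open>t + D < R\<close> by fastforce
  qed (auto intro!: continuous_intros)
  have "norm (Finv (F y) - Finv (F x) - Finv (F' x (y - x)))
      \<le> (f (t + 1 * D) - 1 * D * f' t) - (f (t + 0 * D) - 0 * D * f' t)"
  proof (rule linearization_error_le[where \<phi> = "\<lambda>\<tau>. f (t + \<tau> * D) - \<tau> * D * f' t"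
        and \<phi>' = "\<lambda>\<tau>. (f' (t + \<tau> * D) - f' t) * D" and F' = "\<lambda>z v. Finv (F' z v)"])
    fix \<tau> :: real
    assume "\<tau> \<in> {0..1}"
    then show "((\<lambda>z. Finv (F z)) has_derivative (\<lambda>v. Finv (F' (x + \<tau> *\<^sub>R (y - x)) v)))
        (at (x + \<tau> *\<^sub>R (y - x)))"
      using F_deriv p_ball by (auto simp: p_def intro: bounded_linear.has_derivative[OF blinfun.bounded_linear_right])
  next
    fix \<tau> :: real
    assume \<tau>: "\<tau> \<in> {0<..<1}"
    have \<tau>01: "\<tau> \<in> {0..1}" using \<tau> by auto
    have tD_interior: "t + \<tau> * D \<in> {0<..<R}"
    proof -
      have "0 < \<tau> * D" "\<tau> * D < D" using \<tau> \<open>0 < D\<close> by auto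
      then show ?thesis using \<open>0 \<le> t\<close> \<open>t + D < R\<close> by auto
    qed
    have "((\<lambda>\<tau>. f (t + \<tau> * D)) has_real_derivative f' (t + \<tau> * D) * D) (at \<tau>)"
      by (rule DERIV_chain2[where g = "\<lambda>\<tau>. t + \<tau> * D", OF f_deriv_at[OF tD_interior]])
        (auto intro!: derivative_eq_intros)
    then show "((\<lambda>\<tau>. f (t + \<tau> * D) - \<tau> * D * f' t)
        has_real_derivative (f' (t + \<tau> * D) - f' t) * D) (at \<tau>)"
      by (auto intro!: derivative_eq_intros simp: algebra_simps)
    have "norm (Finv (F' (p \<tau>) (y - x)) - Finv (F' x (y - x))) \<le> norm (Finv o\<^sub>L (F' (p \<tau>) - F' x)) * d"
      using norm_blinfun[of "Finv o\<^sub>L (F' (p \<tau>) - F' x)" "y - x"]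
      by (simp add: d_def blinfun.diff_left blinfun.diff_right algebra_simps)
    also have "\<dots> \<le> (f' (\<tau> * d + s) - f' s) * d"
      using majorant[OF \<open>x \<in> ball x0 R\<close> p_ball[OF \<tau>01]] p_dist[OF \<tau>01] tD[OF \<tau>01]
        \<open>0 \<le> d\<close> \<open>s \<le> t\<close> \<open>t + D < R\<close>
      by (auto simp: s_def intro!: mult_right_mono)
    also have "\<dots> \<le> (f' (t + \<tau> * d) - f' t) * d"
      using convex_on_increment_mono[OF f'_convex, of s t "\<tau> * d"] tD[OF \<tau>01]
        \<open>0 \<le> d\<close> \<open>0 \<le> t\<close> \<open>s \<le> t\<close> \<open>t + D < R\<close>
      by (intro mult_right_mono) (auto simp: s_def add.commute)
    also have "\<dots> \<le> (f' (t + \<tau> * D) - f' t) * D"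
      using tD[OF \<tau>01] \<open>0 \<le> d\<close> \<open>d \<le> D\<close> \<open>0 \<le> t\<close> \<open>t + D < R\<close>
      by (intro mult_mono) (auto intro!: mono_onD[OF f'_mono])
    finally show "norm (Finv (F' (x + \<tau> *\<^sub>R (y - x)) (y - x)) - Finv (F' x (y - x)))
        \<le> (f' (t + \<tau> * D) - f' t) * D"
      by (simp add: p_def)
  qed (use f_cont in \<open>auto intro!: continuous_intros\<close>)
  moreover have "Finv (F y - F x - F' x (y - x)) = Finv (F y) - Finv (F x) - Finv (F' x (y - x))"
    by (simp add: blinfun.diff_right)
  ultimately show ?thesis by (simp add: mult.commute)
qed

end

theorem lemma4p1:
  fixes F :: "'a::banach \<Rightarrow> 'b::banach"
    and F' :: "'a \<Rightarrow> ('a \<Rightarrow>\<^sub>L 'b)"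
    and Finv :: "'b \<Rightarrow>\<^sub>L 'a"
    and C :: "'a set" and x0 :: 'a and R :: real
    and f f' :: "real \<Rightarrow> real"
    and t \<epsilon> \<theta> :: real and x y :: 'a
  assumes F_cont: "continuous_on C F"
    and F_deriv: "\<And>z. z \<in> interior C \<Longrightarrow> (F has_derivative blinfun_apply (F' z)) (at z)"
    and F'_cont: "continuous_on (interior C) F'"
    and x0_int: "x0 \<in> interior C"
    and Finv_left: "Finv o\<^sub>L F' x0 = id_blinfun"
    and Finv_right: "F' x0 o\<^sub>L Finv = id_blinfun"
    and f_deriv: "\<And>s. s \<in> {0..<R} \<Longrightarrow> (f has_real_derivative f' s) (at s within {0..<R})"
    and f'_cont: "continuous_on {0..<R} f'"
    and ball_sub: "ball x0 R \<subseteq> C"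
    and majorant: "\<And>u v. u \<in> ball x0 R \<Longrightarrow> v \<in> ball x0 R \<Longrightarrow> norm (u - x0) + norm (v - u) < R \<Longrightarrow>
        norm (Finv o\<^sub>L (F' v - F' u)) \<le> f' (norm (v - u) + norm (u - x0)) - f' (norm (u - x0))"
    and init: "norm (Finv (F x0)) \<le> f 0"
    and h1: "f 0 > 0" "f' 0 = -1"
    and h2: "strict_mono_on {0..<R} f'" "convex_on {0..<R} f'"
    and h3: "\<exists>s\<in>{0<..<R}. f s < 0"
    and t_nn: "t \<ge> 0" and eps_nn: "\<epsilon> \<ge> 0" and theta_nn: "\<theta> \<ge> 0"
    and xC: "x \<in> C"
    and x_t: "norm (x - x0) \<le> t" and t_lt: "t < tbar f' R"
    and Fx: "norm (Finv (F x)) \<le> f t + \<epsilon>"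
    and step_lt: "t - (1 + \<theta>) * ((f t + \<epsilon>) / f' t) < R"
    and y_inexact: "norm (Finv (F x + F' x (y - x))) \<le> \<theta> * norm (Finv (F x))"
  shows "norm (y - x) \<le> - ((1 + \<theta>) * ((f t + \<epsilon>) / f' t))
    \<and> norm (y - x0) \<le> t - (1 + \<theta>) * ((f t + \<epsilon>) / f' t)
    \<and> t - (1 + \<theta>) * ((f t + \<epsilon>) / f' t) < R
    \<and> norm (Finv (F y)) \<le> f (t - (1 + \<theta>) * ((f t + \<epsilon>) / f' t)) + \<epsilon> + 2 * \<theta> * (f t + \<epsilon>)"
proof -
  have "0 < R" using h3 by auto
  with less_tbarD[OF t_lt t_nn] h1(2) strict_mono_on_imp_mono_on[OF h2(1)]
  have "t < R" and f't_neg: "f' t < 0" by auto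
  have "ball x0 R \<subseteq> interior C" using ball_sub by (simp add: interior_maximal)
  then interpret majorant_condition F F' Finv x0 R f f'
    using F_deriv Finv_left majorant f_deriv h1(2) strict_mono_on_imp_mono_on[OF h2(1)] h2(2)
    by unfold_locales auto
  define D where "D = - ((1 + \<theta>) * ((f t + \<epsilon>) / f' t))"
  have D_step: "f' t * D = - ((1 + \<theta>) * (f t + \<epsilon>))"
    using f't_neg by (simp add: D_def)
  have "norm (Finv (F' x (y - x))) \<le> norm (Finv (F x + F' x (y - x))) + norm (Finv (F x))"
    using norm_triangle_ineq4[of "Finv (F x + F' x (y - x))" "Finv (F x)"] by (simp add: blinfun.add_right)
  also have "\<dots> \<le> (1 + \<theta>) * (f t + \<epsilon>)"
    using y_inexact Fx mult_left_mono[OF Fx theta_nn] by (simp add: algebra_simps)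
  finally have "- f' t * norm (y - x) \<le> - f' t * D"
    using derivative_lower_bound[OF x_t \<open>t < R\<close>, of "y - x"] D_step by simp
  then have step_le: "norm (y - x) \<le> D"
    using f't_neg by simp
  have "norm (y - x0) \<le> t + D"
    using norm_triangle_ineq[of "y - x" "x - x0"] x_t step_le by simp
  have "norm (Finv (F y)) \<le> norm (Finv (F x + F' x (y - x))) + norm (Finv (F y - F x - F' x (y - x)))"
    using norm_triangle_ineq[of "Finv (F x + F' x (y - x))" "Finv (F y - F x - F' x (y - x))"]
    by (simp add: blinfun.add_right blinfun.diff_right)
  moreover have "norm (Finv (F y - F x - F' x (y - x))) \<le> f (t + D) - f t - f' t * D"
    using linearization_error_majorant[OF x_t step_le t_nn] step_lt by (simp add: D_def)
  ultimately have "norm (Finv (F y)) \<le> f (t + D) + \<epsilon> + 2 * \<theta> * (f t + \<epsilon>)"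
    using y_inexact mult_left_mono[OF Fx theta_nn] D_step by (simp add: algebra_simps)
  moreover have step_eq: "t - (1 + \<theta>) * ((f t + \<epsilon>) / f' t) = t + D"
    by (simp add: D_def)
  ultimately show ?thesis
    using step_le step_lt \<open>norm (y - x0) \<le> t + D\<close> unfolding step_eq D_def[symmetric] by simp
qed

end
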